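(* Let $f \in \Bbbk[t]\setminus\Bbbk$ and let $L$ be a Lie subalgebra of $L(f)$ of finite codimension in $L(f)$. Then there exists $g \in \Bbbk[t]\setminus\{0\}$ with $f'g\in\Bbbk[f]$ such that $L(f,g) \subseteq L$.
   Context: $\Bbbk$ is a field of characteristic zero. $\mathbb{W}_1 = \Bbbk[t]\partial$, $\partial = d/dt$, with bracket $[f\partial, g\partial] = (fg'-f'g)\partial$. For $f,g \in \Bbbk[t]\setminus\{0\}$ with $f'g \in \Bbbk[f]$, $L(f,g) = \Bbbk[f]\,g\partial \subseteq \mathbb{W}_1$. $g_f$ is the unique monic polynomial of minimal degree with $f'g_f \in \Bbbk[f]$, and $L(f) = L(f,g_f)$. *)

theory Defs
  imports "HOL-Computational_Algebra.Polynomial"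
begin

text \<open>We identify the Witt algebra W_1 = k[t] d/dt with k[t]: the polynomial g stands for g d/dt.\<close>

definition wbr :: "'a::field_char_0 poly \<Rightarrow> 'a poly \<Rightarrow> 'a poly" where
  "wbr a b = a * pderiv b - pderiv a * b"

definition in_kf :: "'a::field_char_0 poly \<Rightarrow> 'a poly \<Rightarrow> bool" where
  "in_kf f q \<longleftrightarrow> (\<exists>p. q = pcompose p f)"

definition admissible :: "'a::field_char_0 poly \<Rightarrow> 'a poly \<Rightarrow> bool" where
  "admissible f g \<longleftrightarrow> g \<noteq> 0 \<and> in_kf f (pderiv f * g)"

definition Lfg :: "'a::field_char_0 poly \<Rightarrow> 'a poly \<Rightarrow> 'a poly set" where
  "Lfg f g = {pcompose p f * g | p. True}"

definition gf :: "'a::field_char_0 poly \<Rightarrow> 'a poly" where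
  "gf f = (THE g. admissible f g \<and> lead_coeff g = 1 \<and>
                  (\<forall>h. admissible f h \<longrightarrow> degree g \<le> degree h))"

definition Lf :: "'a::field_char_0 poly \<Rightarrow> 'a poly set" where
  "Lf f = Lfg f (gf f)"

definition lie_subalg :: "'a::field_char_0 poly set \<Rightarrow> bool" where
  "lie_subalg L \<longleftrightarrow> 0 \<in> L \<and> (\<forall>x\<in>L. \<forall>y\<in>L. x + y \<in> L) \<and>
     (\<forall>c. \<forall>x\<in>L. smult c x \<in> L) \<and> (\<forall>x\<in>L. \<forall>y\<in>L. wbr x y \<in> L)"

definition fin_codim :: "'a::field_char_0 poly set \<Rightarrow> 'a poly set \<Rightarrow> bool" where
  "fin_codim L M \<longleftrightarrow> (\<exists>B. finite B \<and>
     (\<forall>x\<in>M. \<exists>l\<in>L. \<exists>c. x = l + (\<Sum>b\<in>B. smult (c b) b)))"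

end

theory Submission
  imports Defs "HOL-Library.Set_Algebras"
begin

text \<open>Write \<open>L(f) = \<Bbbk>[f] h\<close> with \<open>h = g\<^sub>f\<close> and \<open>f' h = r(f)\<close>, so that
\<open>[p(f) h, q(f) h] = (r (p q' - p' q))(f) h\<close>. Since \<open>L\<close> has finite codimension, \<open>L(f) \<subseteq> L + span C\<close>
for a finite \<open>C \<subseteq> L(f)\<close>. The conditions \<open>m \<in> L\<close> and \<open>[m, c] \<in> L\<close> for \<open>c \<in> C\<close> amount to
finitely many linear equations modulo \<open>L\<close>, so some nonzero \<open>m = P(f) h\<close> satisfies them all, and
then \<open>[m, L(f)] \<subseteq> L\<close>. Finally, for any \<open>p\<close> choose \<open>q\<close> with \<open>q' = p\<close>; then
\<open>[m, (P q)(f) h] = (P\<^sup>2 r p)(f) h\<close>, hence \<open>L(f, (P\<^sup>2 r)(f) h) \<subseteq> L\<close>.\<close>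

interpretation smult: module "smult :: 'a::comm_ring_1 \<Rightarrow> 'a poly \<Rightarrow> 'a poly"
  by unfold_locales (simp_all add: smult_add_right smult_add_left)

lemma homogeneous_system_nontrivial_solution:
  fixes v :: "'i \<Rightarrow> 'j \<Rightarrow> 'a::field"
  assumes "finite S" "finite I" "card S < card I"
    and "\<And>i j. i \<in> I \<Longrightarrow> j \<notin> S \<Longrightarrow> v i j = 0"
  shows "\<exists>a. (\<exists>i\<in>I. a i \<noteq> 0) \<and> (\<forall>j. (\<Sum>i\<in>I. a i * v i j) = 0)"
  using assms
proof (induction S arbitrary: I v rule: finite_induct)
  case empty
  then obtain i where "i \<in> I" by fastforce
  then show ?case using empty by (intro exI[of _ "\<lambda>_. 1"]) auto
next
  case (insert s S)
  show ?case
  proof (cases "\<forall>i\<in>I. v i s = 0")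
    case True
    have "card S < card I" using insert.hyps insert.prems(2) by simp
    moreover have "v i j = 0" if "i \<in> I" "j \<notin> S" for i j
      using True insert.prems(3) that by (cases "j = s") auto
    ultimately show ?thesis using insert.IH insert.prems(1) by blast
  next
    case False
    then obtain i0 where i0: "i0 \<in> I" "v i0 s \<noteq> 0" by auto
    \<comment> \<open>eliminate the coordinate \<open>s\<close> using the row \<open>i0\<close>\<close>
    define w where "w i j = v i j - v i s / v i0 s * v i0 j" for i j
    have "w i j = 0" if "i \<in> I - {i0}" "j \<notin> S" for i j
      using insert.prems(3) i0 that by (cases "j = s") (auto simp: w_def)
    moreover have "card S < card (I - {i0})" using insert i0 by (simp add: card_Diff_singleton)
    ultimately obtain b where
      b: "\<exists>i\<in>I - {i0}. b i \<noteq> 0" "\<And>j. (\<Sum>i\<in>I - {i0}. b i * w i j) = 0"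
      using insert.IH[of "I - {i0}" w] insert.prems(1) by auto
    define a where "a i = (if i = i0 then - (\<Sum>i\<in>I - {i0}. b i * v i s) / v i0 s else b i)" for i
    have "(\<Sum>i\<in>I. a i * v i j) = 0" for j
    proof -
      have "(\<Sum>i\<in>I. a i * v i j) = a i0 * v i0 j + (\<Sum>i\<in>I - {i0}. b i * v i j)"
        using i0 insert.prems(1) by (simp add: sum.remove a_def)
      also have "(\<Sum>i\<in>I - {i0}. b i * v i j)
          = (\<Sum>i\<in>I - {i0}. b i * w i j) + (\<Sum>i\<in>I - {i0}. b i * v i s) / v i0 s * v i0 j"
        unfolding w_def
        by (simp add: right_diff_distrib sum_subtractf sum_distrib_left sum_distrib_right
            sum_divide_distrib mult_ac)
      finally show ?thesis using b(2) i0(2) by (simp add: a_def field_simps)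
    qed
    moreover have "\<exists>i\<in>I. a i \<noteq> 0" using b(1) by (auto simp: a_def)
    ultimately show ?thesis by blast
  qed
qed

lemma dependent_mod_subspace:
  fixes u :: "'i \<Rightarrow> 'j \<Rightarrow> 'a::field poly"
  assumes L: "smult.subspace L" and B: "finite B" and I: "finite I" and J: "finite J"
    and card: "card J * card B < card I"
    and u: "\<And>i j. i \<in> I \<Longrightarrow> j \<in> J \<Longrightarrow> u i j \<in> L + smult.span B"
  shows "\<exists>a. (\<exists>i\<in>I. a i \<noteq> 0) \<and> (\<forall>j\<in>J. (\<Sum>i\<in>I. smult (a i) (u i j)) \<in> L)"
proof -
  have "\<exists>c. u i j - (\<Sum>b\<in>B. smult (c b) b) \<in> L" if ij: "i \<in> I" "j \<in> J" for i j
  proof -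
    obtain l s where "l \<in> L" "s \<in> smult.span B" "u i j = l + s"
      using u[OF ij] by (auto elim: set_plus_elim)
    moreover from \<open>s \<in> smult.span B\<close> obtain c where "s = (\<Sum>b\<in>B. smult (c b) b)"
      by (auto simp: smult.span_finite[OF B])
    ultimately show ?thesis by (intro exI[of _ c]) simp
  qed
  then have "\<forall>i j. \<exists>c. i \<in> I \<longrightarrow> j \<in> J \<longrightarrow> u i j - (\<Sum>b\<in>B. smult (c b) b) \<in> L"
    by blast
  then obtain c where c: "\<And>i j. i \<in> I \<Longrightarrow> j \<in> J \<Longrightarrow> u i j - (\<Sum>b\<in>B. smult (c i j b) b) \<in> L"
    by (metis choice_iff)
  define v where "v i = (\<lambda>(j, b). if j \<in> J \<and> b \<in> B then c i j b else 0)" for i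
  have "v i jb = 0" if "jb \<notin> J \<times> B" for i jb
    using that by (auto simp: v_def split: prod.splits)
  then obtain a where a: "\<exists>i\<in>I. a i \<noteq> 0" "\<And>jb. (\<Sum>i\<in>I. a i * v i jb) = 0"
    using homogeneous_system_nontrivial_solution[of "J \<times> B" I v] B I J card
    by (auto simp: card_cartesian_product)
  have "(\<Sum>i\<in>I. smult (a i) (u i j)) \<in> L" if j: "j \<in> J" for j
  proof -
    have "(\<Sum>b\<in>B. smult (\<Sum>i\<in>I. a i * c i j b) b)
        = (\<Sum>i\<in>I. smult (a i) (\<Sum>b\<in>B. smult (c i j b) b))"
      by (simp add: smult_sum smult.scale_sum_right) (rule sum.swap)
    then have "(\<Sum>i\<in>I. smult (a i) (u i j))
        = (\<Sum>i\<in>I. smult (a i) (u i j - (\<Sum>b\<in>B. smult (c i j b) b)))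
          + (\<Sum>b\<in>B. smult (\<Sum>i\<in>I. a i * c i j b) b)"
      by (simp add: smult_diff_right sum_subtractf)
    also have "(\<Sum>b\<in>B. smult (\<Sum>i\<in>I. a i * c i j b) b) = 0"
    proof (rule sum.neutral, intro ballI)
      fix b assume "b \<in> B"
      then show "smult (\<Sum>i\<in>I. a i * c i j b) b = 0"
        using a(2)[of "(j, b)"] j by (simp add: v_def)
    qed
    finally show ?thesis
      using c j L by (simp add: smult.subspace_sum smult.subspace_scale)
  qed
  with a(1) show ?thesis by blast
qed

definition independent_mod :: "'a::field poly set \<Rightarrow> 'a poly set \<Rightarrow> bool" where
  "independent_mod L C \<longleftrightarrow> (\<forall>a. (\<Sum>c\<in>C. smult (a c) c) \<in> L \<longrightarrow> (\<forall>c\<in>C. a c = 0))"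

lemma card_le_if_independent_mod:
  fixes L :: "'a::field poly set"
  assumes "smult.subspace L" "finite B" "finite C" "C \<subseteq> L + smult.span B" "independent_mod L C"
  shows "card C \<le> card B"
proof (rule ccontr)
  assume "\<not> card C \<le> card B"
  then obtain a where "\<exists>c\<in>C. a c \<noteq> 0" "(\<Sum>c\<in>C. smult (a c) c) \<in> L"
    using dependent_mod_subspace[of L B C "{()}" "\<lambda>c _. c"] assms(1-4) by auto
  with assms(5) show False unfolding independent_mod_def by blast
qed

lemma exists_finite_complement_within:
  fixes L :: "'a::field poly set"
  assumes L: "smult.subspace L" and B: "finite B" and M: "M \<subseteq> L + smult.span B"
  shows "\<exists>C. finite C \<and> C \<subseteq> M \<and> M \<subseteq> L + smult.span C"
proof -
  define P where "P C \<longleftrightarrow> finite C \<and> C \<subseteq> M \<and> independent_mod L C" for C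
  have "P {}" by (simp add: P_def independent_mod_def)
  moreover have "card C < Suc (card B)" if "P C" for C
    using card_le_if_independent_mod[OF L B, of C] M that unfolding P_def
    by (meson le_imp_less_Suc order.trans)
  ultimately obtain C where C: "P C" and max: "\<And>C'. P C' \<Longrightarrow> card C' \<le> card C"
    using ex_has_greatest_nat[of P "{}" card "Suc (card B)"] by auto
  have "x \<in> L + smult.span C" if x: "x \<in> M" for x
  proof (cases "x \<in> C")
    case True
    then show ?thesis
      using set_plus_intro[OF smult.subspace_0[OF L] smult.span_base[of x C]] by simp
  next
    case False
    with C x have "\<not> P (insert x C)"
      using max[of "insert x C"] by (auto simp: P_def)
    with C x obtain a where a: "(\<Sum>c\<in>insert x C. smult (a c) c) \<in> L" "\<exists>c\<in>insert x C. a c \<noteq> 0"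
      unfolding P_def independent_mod_def by blast
    have ax: "a x \<noteq> 0"
      using a C False unfolding P_def independent_mod_def by (auto simp: sum.insert)
    define s where "s = smult (- inverse (a x)) (\<Sum>c\<in>C. smult (a c) c)"
    have "s \<in> smult.span C"
      unfolding s_def by (intro smult.span_scale smult.span_sum smult.span_base)
    moreover have "x = smult (inverse (a x)) (\<Sum>c\<in>insert x C. smult (a c) c) + s"
      using C False ax unfolding P_def s_def by (simp add: smult_add_right)
    ultimately show ?thesis
      using set_plus_intro[OF smult.subspace_scale[OF L a(1)]] by metis
  qed
  with C show ?thesis unfolding P_def by blast
qed

lemma fin_codim_imp_subset_plus_span:
  assumes "fin_codim L M"
  shows "\<exists>B. finite B \<and> M \<subseteq> L + smult.span B"
proof -
  obtain B where B: "finite B" "\<forall>x\<in>M. \<exists>l\<in>L. \<exists>c. x = l + (\<Sum>b\<in>B. smult (c b) b)"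
    using assms unfolding fin_codim_def by blast
  have "M \<subseteq> L + smult.span B"
    using B by (auto simp: smult.span_finite intro!: set_plus_intro)
  with B(1) show ?thesis by blast
qed

lemma pcompose_monom: "pcompose (monom a n) f = smult a (f ^ n)"
  by (induction n) (simp_all add: monom_0 monom_Suc pcompose_pCons pcompose_smult mult.commute)

lemma pcompose_sum_monom: "pcompose (\<Sum>i\<in>I. monom (a i) i) f = (\<Sum>i\<in>I. smult (a i) (f ^ i))"
  by (simp add: pcompose_sum pcompose_monom)

lemma sum_monom_eq_0_iff:
  assumes "finite I"
  shows "(\<Sum>i\<in>I. monom (a i) i) = 0 \<longleftrightarrow> (\<forall>i\<in>I. a i = 0)"
proof -
  have "coeff (\<Sum>i\<in>I. monom (a i) i) k = (if k \<in> I then a k else 0)" for k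
    using assms by (simp add: coeff_sum coeff_monom)
  then show ?thesis by (auto simp: poly_eq_iff)
qed

lemma exists_nonzero_pcompose_dvd:
  fixes d f :: "'a::field poly"
  assumes "d \<noteq> 0"
  shows "\<exists>P. P \<noteq> 0 \<and> d dvd pcompose P f"
proof -
  define L where "L = range ((*) d)"
  define B :: "'a poly set" where "B = (\<lambda>j. monom 1 j) ` {..degree d}"
  have L: "smult.subspace L"
    unfolding L_def
  proof (rule smult.subspaceI)
    show "0 \<in> range ((*) d)" using rangeI[of "(*) d" 0] by simp
    show "x + y \<in> range ((*) d)" if "x \<in> range ((*) d)" "y \<in> range ((*) d)" for x y
      using that by (auto simp flip: distrib_left)
    show "smult c x \<in> range ((*) d)" if "x \<in> range ((*) d)" for c x
      using that by (auto simp flip: mult_smult_right)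
  qed
  have "card B = Suc (degree d)"
    unfolding B_def by (subst card_image) (auto simp: inj_on_def monom_eq_iff')
  moreover have "f ^ i \<in> L + smult.span B" for i
  proof -
    have "degree (f ^ i mod d) \<le> degree d"
      using degree_mod_less[OF assms, of "f ^ i"] by auto
    then have "f ^ i mod d = (\<Sum>j\<le>degree d. smult (coeff (f ^ i mod d) j) (monom 1 j))"
      by (simp add: smult_monom poly_as_sum_of_monoms')
    also have "\<dots> \<in> smult.span B"
      unfolding B_def by (intro smult.span_sum smult.span_scale smult.span_base) auto
    finally have "f ^ i mod d \<in> smult.span B" .
    moreover have "f ^ i = d * (f ^ i div d) + f ^ i mod d" by simp
    ultimately show ?thesis unfolding L_def by (metis rangeI set_plus_intro)
  qed
  moreover define I where "I = {..Suc (degree d)}"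
  ultimately obtain a where a: "\<exists>i\<in>I. a i \<noteq> 0" "(\<Sum>i\<in>I. smult (a i) (f ^ i)) \<in> L"
    using dependent_mod_subspace[OF L, of B I "{()}" "\<lambda>i _. f ^ i"]
    by (auto simp: B_def I_def)
  define P where "P = (\<Sum>i\<in>I. monom (a i) i)"
  have "P \<noteq> 0" using a(1) unfolding P_def by (subst sum_monom_eq_0_iff) (auto simp: I_def)
  moreover have "d dvd pcompose P f"
    using a(2) unfolding P_def pcompose_sum_monom L_def by auto
  ultimately show ?thesis by blast
qed

lemma pderiv_sum: "pderiv (\<Sum>i\<in>I. p i) = (\<Sum>i\<in>I. pderiv (p i))"
  using higher_pderiv_sum[of 1] by simp

lemma exists_antiderivative:
  fixes p :: "'a::field_char_0 poly"
  shows "\<exists>q. pderiv q = p"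
proof -
  define q where "q = (\<Sum>i\<le>degree p. monom (coeff p i / of_nat (Suc i)) (Suc i))"
  have "pderiv q = (\<Sum>i\<le>degree p. monom (coeff p i) i)"
    unfolding q_def pderiv_sum by (rule sum.cong) (simp_all add: pderiv_monom del: of_nat_Suc)
  then show ?thesis using poly_as_sum_of_monoms by metis
qed

lemma ex_admissible:
  fixes f :: "'a::field_char_0 poly"
  assumes "degree f > 0"
  shows "\<exists>g. admissible f g"
proof -
  have "pderiv f \<noteq> 0" using assms by (simp add: pderiv_eq_0_iff)
  then obtain P g where P: "P \<noteq> 0" "pcompose P f = pderiv f * g"
    using exists_nonzero_pcompose_dvd by (metis dvdE)
  then have "g \<noteq> 0" using pcompose_eq_0[OF _ assms] by auto
  with P show ?thesis unfolding admissible_def in_kf_def by metis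
qed

lemma admissible_smult: "admissible f g \<Longrightarrow> c \<noteq> 0 \<Longrightarrow> admissible f (smult c g)"
  unfolding admissible_def in_kf_def by (metis mult_smult_right pcompose_smult smult_eq_0_iff)

lemma admissible_diff:
  "admissible f g \<Longrightarrow> admissible f g' \<Longrightarrow> g \<noteq> g' \<Longrightarrow> admissible f (g - g')"
  unfolding admissible_def in_kf_def by (metis right_diff_distrib pcompose_diff eq_iff_diff_eq_0)

lemma gf_admissible:
  fixes f :: "'a::field_char_0 poly"
  assumes "degree f > 0"
  shows "admissible f (gf f)"
proof -
  define Q where "Q g \<longleftrightarrow> admissible f g \<and> lead_coeff g = 1 \<and>
      (\<forall>h. admissible f h \<longrightarrow> degree g \<le> degree h)" for g
  obtain g0 where g0: "admissible f g0" and min: "\<And>h. admissible f h \<Longrightarrow> degree g0 \<le> degree h"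
    using ex_has_least_nat[of "admissible f" _ degree] ex_admissible[OF assms] by metis
  then have "g0 \<noteq> 0" by (simp add: admissible_def)
  define g1 where "g1 = smult (inverse (lead_coeff g0)) g0"
  have "Q g1"
    using g0 min \<open>g0 \<noteq> 0\<close> unfolding Q_def g1_def by (simp add: admissible_smult)
  moreover have "g = g1" if "Q g" for g
  proof (rule ccontr)
    assume "g \<noteq> g1"
    with \<open>Q g\<close> \<open>Q g1\<close> have adm: "admissible f (g - g1)"
      unfolding Q_def by (simp add: admissible_diff)
    have deg: "degree g = degree g1" using \<open>Q g\<close> \<open>Q g1\<close> unfolding Q_def by (meson le_antisym)
    have "degree (g - g1) < degree g"
    proof (rule degree_less_if_less_eqI)
      show "degree (g - g1) \<le> degree g" using deg by (simp add: degree_diff_le)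
      show "coeff (g - g1) (degree g) = 0" using \<open>Q g\<close> \<open>Q g1\<close> deg unfolding Q_def by simp
      show "g - g1 \<noteq> 0" using \<open>g \<noteq> g1\<close> by simp
    qed
    with adm \<open>Q g\<close> show False unfolding Q_def by (meson not_le)
  qed
  ultimately have "Q (gf f)"
    unfolding gf_def Q_def[symmetric] by (rule theI)
  then show ?thesis unfolding Q_def by blast
qed

lemma admissible_pcompose_mult:
  assumes h: "admissible f h" and f: "degree f > 0" and q: "q \<noteq> 0"
  shows "admissible f (pcompose q f * h)"
proof -
  obtain r where "pderiv f * h = pcompose r f"
    using h unfolding admissible_def in_kf_def by blast
  then have "pderiv f * (pcompose q f * h) = pcompose (q * r) f"
    by (simp add: pcompose_mult algebra_simps)
  moreover have "pcompose q f \<noteq> 0" using pcompose_eq_0[OF _ f] q by blast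
  ultimately show ?thesis
    using h unfolding admissible_def in_kf_def by auto
qed

lemma lie_subalg_subspace: "lie_subalg L \<Longrightarrow> smult.subspace L"
  unfolding lie_subalg_def smult.subspace_def by blast

lemma wbr_add_right: "wbr x (y + z) = wbr x y + wbr x z"
  by (simp add: wbr_def pderiv_add algebra_simps)

lemma wbr_smult_right: "wbr x (smult c y) = smult c (wbr x y)"
  by (simp add: wbr_def pderiv_smult smult_diff_right)

lemma wbr_sum_smult_left:
  "wbr (\<Sum>i\<in>I. smult (a i) (x i)) y = (\<Sum>i\<in>I. smult (a i) (wbr (x i) y))"
  by (simp add: wbr_def pderiv_sum pderiv_smult sum_distrib_left sum_distrib_right
      sum_subtractf smult_diff_right)

lemma wbr_mem_if_mem_on_complement:
  assumes L: "lie_subalg L" and m: "m \<in> L" and C: "\<And>c. c \<in> C \<Longrightarrow> wbr m c \<in> L"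
    and x: "x \<in> L + smult.span C"
  shows "wbr m x \<in> L"
proof -
  have "smult.subspace {y. wbr m y \<in> L}"
  proof (rule smult.subspaceI)
    show "0 \<in> {y. wbr m y \<in> L}" using L by (simp add: wbr_def lie_subalg_def)
    show "y + z \<in> {y. wbr m y \<in> L}" if "y \<in> {y. wbr m y \<in> L}" "z \<in> {y. wbr m y \<in> L}" for y z
      using L that by (simp add: wbr_add_right lie_subalg_def)
    show "smult c y \<in> {y. wbr m y \<in> L}" if "y \<in> {y. wbr m y \<in> L}" for c y
      using L that by (simp add: wbr_smult_right lie_subalg_def)
  qed
  then have span: "smult.span C \<subseteq> {y. wbr m y \<in> L}"
    using C by (intro smult.span_minimal) auto
  obtain l s where "l \<in> L" "s \<in> smult.span C" "x = l + s"
    using x by (auto elim: set_plus_elim)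
  then show ?thesis
    using L m span unfolding lie_subalg_def by (auto simp: wbr_add_right)
qed

lemma wbr_pcompose_mult:
  assumes "pderiv f * h = pcompose r f"
  shows "wbr (pcompose p f * h) (pcompose q f * h)
    = pcompose (r * (p * pderiv q - pderiv p * q)) f * h"
  by (simp add: wbr_def pderiv_mult pderiv_pcompose pcompose_mult pcompose_diff assms[symmetric]
      algebra_simps)

lemma wbr_Lfg:
  assumes "in_kf f (pderiv f * h)" "x \<in> Lfg f h" "y \<in> Lfg f h"
  shows "wbr x y \<in> Lfg f h"
  using assms wbr_pcompose_mult unfolding in_kf_def Lfg_def by blast

lemma Lfg_subset_if_wbr_mem:
  assumes r: "pderiv f * h = pcompose r f"
    and P: "\<And>q. wbr (pcompose P f * h) (pcompose q f * h) \<in> L"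
  shows "Lfg f (pcompose (P * P * r) f * h) \<subseteq> L"
proof
  fix y assume "y \<in> Lfg f (pcompose (P * P * r) f * h)"
  then obtain p where y: "y = pcompose p f * (pcompose (P * P * r) f * h)"
    unfolding Lfg_def by blast
  obtain q where q: "pderiv q = p" using exists_antiderivative by blast
  \<comment> \<open>\<open>P (P q)' - P' (P q) = P\<^sup>2 q'\<close>\<close>
  have "wbr (pcompose P f * h) (pcompose (P * q) f * h)
      = pcompose (r * (P * pderiv (P * q) - pderiv P * (P * q))) f * h"
    by (rule wbr_pcompose_mult[OF r])
  also have "\<dots> = y"
    unfolding y q[symmetric] by (simp add: pderiv_mult pcompose_mult algebra_simps)
  finally show "y \<in> L" using P by metis
qed

lemma exists_pcompose_mult_normalizing:
  fixes f h :: "'a::field_char_0 poly"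
  assumes L: "lie_subalg L" and C: "finite C" "C \<subseteq> Lfg f h" "Lfg f h \<subseteq> L + smult.span C"
    and h: "in_kf f (pderiv f * h)"
  shows "\<exists>P. P \<noteq> 0 \<and> pcompose P f * h \<in> L \<and>
    (\<forall>c\<in>C. wbr (pcompose P f * h) c \<in> L)"
proof -
  define x where "x i = f ^ i * h" for i :: nat
  have x: "x i \<in> Lfg f h" for i
    unfolding x_def Lfg_def using pcompose_monom[of 1 i f]
    by (metis (mono_tags) mem_Collect_eq smult_1_left)
  define J where "J = insert None (Some ` C)"
  define u where "u i j = (case j of None \<Rightarrow> x i | Some c \<Rightarrow> wbr (x i) c)" for i j
  define I where "I = {..card J * card C}"
  have "u i j \<in> L + smult.span C" if "j \<in> J" for i j
    using that x wbr_Lfg[OF h x] C(2,3) unfolding J_def u_def by (auto simp: subset_iff)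
  then obtain a where a: "\<exists>i\<in>I. a i \<noteq> 0" "\<forall>j\<in>J. (\<Sum>i\<in>I. smult (a i) (u i j)) \<in> L"
    using dependent_mod_subspace[OF lie_subalg_subspace[OF L] C(1), of I J u] C(1)
    by (auto simp: I_def J_def)
  define P where "P = (\<Sum>i\<in>I. monom (a i) i)"
  have m: "pcompose P f * h = (\<Sum>i\<in>I. smult (a i) (x i))"
    unfolding P_def pcompose_sum_monom x_def by (simp add: sum_distrib_right)
  have "P \<noteq> 0" using a(1) unfolding P_def by (subst sum_monom_eq_0_iff) (auto simp: I_def)
  moreover have "pcompose P f * h \<in> L"
    using a(2) unfolding m J_def u_def by auto
  moreover have "wbr (pcompose P f * h) c \<in> L" if "c \<in> C" for c
    using a(2) that unfolding m wbr_sum_smult_left J_def u_def by auto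
  ultimately show ?thesis by blast
qed

theorem mainTheorem3:
  fixes f :: "'a::field_char_0 poly" and L :: "'a poly set"
  assumes "degree f > 0"
    and "lie_subalg L"
    and "L \<subseteq> Lf f"
    and "fin_codim L (Lf f)"
  shows "\<exists>g. g \<noteq> 0 \<and> in_kf f (pderiv f * g) \<and> Lfg f g \<subseteq> L"
proof -
  define h where "h = gf f"
  have h: "admissible f h" using gf_admissible[OF assms(1)] by (simp add: h_def)
  then obtain r where r: "pderiv f * h = pcompose r f"
    unfolding admissible_def in_kf_def by blast
  have "pderiv f \<noteq> 0" using assms(1) by (simp add: pderiv_eq_0_iff)
  with h r have "r \<noteq> 0" by (auto simp: admissible_def)
  have M: "Lf f = Lfg f h" by (simp add: Lf_def h_def)
  obtain B where B: "finite B" "Lfg f h \<subseteq> L + smult.span B"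
    using fin_codim_imp_subset_plus_span[OF assms(4)] unfolding M by blast
  obtain C where C: "finite C" "C \<subseteq> Lfg f h" "Lfg f h \<subseteq> L + smult.span C"
    using exists_finite_complement_within[OF lie_subalg_subspace[OF assms(2)] B] by blast
  obtain P where
    P: "P \<noteq> 0" "pcompose P f * h \<in> L" "\<forall>c\<in>C. wbr (pcompose P f * h) c \<in> L"
    using exists_pcompose_mult_normalizing[OF assms(2) C] h unfolding admissible_def by blast
  have "wbr (pcompose P f * h) (pcompose q f * h) \<in> L" for q
  proof (rule wbr_mem_if_mem_on_complement[OF assms(2) P(2)])
    show "pcompose q f * h \<in> L + smult.span C" using C(3) unfolding Lfg_def by blast
  qed (use P(3) in blast)
  then have "Lfg f (pcompose (P * P * r) f * h) \<subseteq> L"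
    using Lfg_subset_if_wbr_mem[OF r] by blast
  moreover have "admissible f (pcompose (P * P * r) f * h)"
    using admissible_pcompose_mult[OF h assms(1)] P(1) \<open>r \<noteq> 0\<close> by simp
  ultimately show ?thesis unfolding admissible_def by blast
qed

end
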